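(* Let $(\Lambda,d)$ be a topological $1$-graph. For all $f\in C_c(\Lambda^0)$ and $\xi,\eta\in C_c(\Lambda^1)$ we have, in $C^*(G_\Lambda)$, (i) $\Psi_1(\xi)^*\Psi_1(\eta)=\Psi_0(\langle\xi,\eta\rangle)$ and (ii) $\Psi_0(f)\Psi_1(\xi)=\Psi_1(\phi(f)\xi)$.
   Context: A topological $1$-graph is a pair $(\Lambda,d)$ with $\Lambda$ a small category whose object set $\Lambda^0$ and morphism set $\Lambda$ are second-countable locally compact Hausdorff spaces, $r,s$ continuous with $s$ a local homeomorphism, composition continuous and open, $d:\Lambda\to\mathbb{N}$ a continuous functor, with unique factorization: for $d(\lambda)=m+n$ there is a unique composable $(\xi,\eta)$ with $\lambda=\xi\eta$, $d(\xi)=m$, $d(\eta)=n$. Objects are identified with degree-$0$ paths, $\Lambda^1=d^{-1}(1)$, $\lambda(p,q)$ denotes the degree-$(q-p)$ segment. The path space $X_\Lambda$ consists of degree-preserving continuous functors $x:\Omega_{1,m}\to\Lambda$ ($m\in\mathbb{N}\cup\{\infty\}$, where $\Omega_{1,m}$ is the discrete category with objects $\{p\le m\}$, morphisms $(p,q)$, $p\le q\le m$, of degree $q-p$), with $r(x)=x(0)$, $d(x)=m$, concatenation $\lambda x$ and shift $(\sigma^mx)(0,p)=x(m,m+p)$. The path groupoid $G_\Lambda$ has morphisms $(\lambda x,d(\lambda)-d(\mu),\mu x)$ with $s(\lambda)=s(\mu)=r(x)$, range/source the first/third coordinates, product $(x,m,y)(y,n,z)=(x,m+n,z)$, inverse $(y,-m,x)$,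 unit space identified with $X_\Lambda$; with its standard topology (basis $Z(U*_sV,m)\cap Z(F,m)^c$ for $U,V\subset\Lambda$ open, $F\subset\Lambda*_s\Lambda$ compact, where $Z(F,m)=\{(\lambda x,m,\mu x):(\lambda,\mu)\in F,d(\lambda)-d(\mu)=m\}$) it is a locally compact Hausdorff $r$-discrete groupoid with counting-measure Haar system, so $C_c(G_\Lambda)\subset C^*(G_\Lambda)$ with convolution product, and $C_0(G_\Lambda^{(0)})\subset C^*(G_\Lambda)$. For $\xi,\eta\in C_c(\Lambda^1)$, $\langle\xi,\eta\rangle(v)=\sum_{e\in\Lambda^1,s(e)=v}\overline{\xi(e)}\eta(e)$, and for $f\in C_0(\Lambda^0)$, $(\phi(f)\xi)(e)=f(r(e))\xi(e)$. Define $\Psi_0(f)\in C_0(G_\Lambda^{(0)})\subset C^*(G_\Lambda)$ by $\Psi_0(f)(x,0,x)=f(r(x))$, and for $\xi\in C_c(\Lambda^1)$ define $\Psi_1(\xi)\in C_c(G_\Lambda)$ by $\Psi_1(\xi)(x,m,y)=\delta_{m,1}\delta_{\sigma^1x,y}\,\xi(x(0,1))$. *)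

theory Defs
  imports "HOL-Analysis.Analysis" "HOL-Library.Extended_Nat"
begin

text \<open>The morphism space of the small category Lambda is the whole carrier type 'a
 (a second countable Hausdorff space; local compactness is assumed below).
 Objects are identified with identity morphisms (the image of r); composition
 cmp a b means "a followed-by-left b" i.e. the product a b, defined when s a = r b.\<close>

definition lam0 :: "('a \<Rightarrow> 'a) \<Rightarrow> 'a set" where
  "lam0 r = range r"

definition lam1 :: "('a \<Rightarrow> nat) \<Rightarrow> 'a set" where
  "lam1 d = {e. d e = 1}"

definition composable :: "('a \<Rightarrow> 'a) \<Rightarrow> ('a \<Rightarrow> 'a) \<Rightarrow> ('a \<times> 'a) set" where
  "composable r s = {(a, b). s a = r b}"

definition local_homeo :: "('a::topological_space \<Rightarrow> 'b::topological_space) \<Rightarrow> bool" where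
  "local_homeo f \<longleftrightarrow> continuous_on UNIV f \<and>
     (\<forall>x. \<exists>U g. open U \<and> x \<in> U \<and> open (f ` U) \<and> homeomorphism U (f ` U) f g)"

definition topological_1graph ::
  "('a::{t2_space, second_countable_topology} \<Rightarrow> 'a) \<Rightarrow> ('a \<Rightarrow> 'a) \<Rightarrow> ('a \<Rightarrow> 'a \<Rightarrow> 'a)
     \<Rightarrow> ('a \<Rightarrow> nat) \<Rightarrow> bool" where
  "topological_1graph r s cmp d \<longleftrightarrow>
     \<comment> \<open>small category with objects = identity morphisms\<close>
     (\<forall>a. r (r a) = r a \<and> s (r a) = r a \<and> r (s a) = s a \<and> s (s a) = s a) \<and>
     (\<forall>a b. s a = r b \<longrightarrow> r (cmp a b) = r a \<and> s (cmp a b) = s b) \<and>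
     (\<forall>a b c. s a = r b \<longrightarrow> s b = r c \<longrightarrow> cmp (cmp a b) c = cmp a (cmp b c)) \<and>
     (\<forall>a. cmp (r a) a = a \<and> cmp a (s a) = a) \<and>
     \<comment> \<open>topology: locally compact (second countable Hausdorff by the type class)\<close>
     locally_compact_space (euclidean :: 'a topology) \<and>
     locally_compact_space (top_of_set (lam0 r)) \<and>
     continuous_on UNIV r \<and> continuous_on UNIV s \<and> local_homeo s \<and>
     continuous_on (composable r s) (\<lambda>(a, b). cmp a b) \<and>
     (\<forall>U. openin (top_of_set (composable r s)) U \<longrightarrow> open ((\<lambda>(a, b). cmp a b) ` U)) \<and>
     \<comment> \<open>degree functor, continuous into the discrete space nat\<close>
     continuous_on UNIV d \<and>
     (\<forall>a. d (r a) = 0) \<and>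
     (\<forall>a b. s a = r b \<longrightarrow> d (cmp a b) = d a + d b) \<and>
     \<comment> \<open>unique factorisation\<close>
     (\<forall>l m n. d l = m + n \<longrightarrow>
        (\<exists>!(a, b). s a = r b \<and> l = cmp a b \<and> d a = m \<and> d b = n))"

text \<open>A path x of degree m (m in nat or infinity) is a degree-preserving functor
 from Omega_{1,m}; it is represented by the pair (m, X) where X p q is the image of the
 morphism (p,q) for p \<le> q \<le> m, and X p q = undefined off that domain (so that equal
 functors give equal representations). Continuity is automatic as Omega is discrete.\<close>

type_synonym 'a path = "enat \<times> (nat \<Rightarrow> nat \<Rightarrow> 'a)"

definition in_dom :: "enat \<Rightarrow> nat \<Rightarrow> nat \<Rightarrow> bool" where
  "in_dom m p q \<longleftrightarrow> p \<le> q \<and> enat q \<le> m"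

definition is_path :: "('a \<Rightarrow> 'a) \<Rightarrow> ('a \<Rightarrow> 'a) \<Rightarrow> ('a \<Rightarrow> 'a \<Rightarrow> 'a) \<Rightarrow> ('a \<Rightarrow> nat)
     \<Rightarrow> 'a path \<Rightarrow> bool" where
  "is_path r s cmp d x \<longleftrightarrow>
     (\<forall>p q. \<not> in_dom (fst x) p q \<longrightarrow> snd x p q = undefined) \<and>
     (\<forall>p q. in_dom (fst x) p q \<longrightarrow>
        d (snd x p q) = q - p \<and> r (snd x p q) = snd x p p \<and> s (snd x p q) = snd x q q) \<and>
     (\<forall>p q t. in_dom (fst x) p q \<longrightarrow> in_dom (fst x) q t \<longrightarrow>
        snd x p t = cmp (snd x p q) (snd x q t))"

definition path_space :: "('a \<Rightarrow> 'a) \<Rightarrow> ('a \<Rightarrow> 'a) \<Rightarrow> ('a \<Rightarrow> 'a \<Rightarrow> 'a) \<Rightarrow> ('a \<Rightarrow> nat)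
     \<Rightarrow> 'a path set" where
  "path_space r s cmp d = {x. is_path r s cmp d x}"

definition prange :: "'a path \<Rightarrow> 'a" where
  "prange x = snd x 0 0"

definition pdeg :: "'a path \<Rightarrow> enat" where
  "pdeg x = fst x"

definition shift :: "nat \<Rightarrow> 'a path \<Rightarrow> 'a path" where
  "shift n x = (fst x - enat n,
     (\<lambda>p q. if in_dom (fst x - enat n) p q then snd x (n + p) (n + q) else undefined))"

definition concat :: "('a \<Rightarrow> 'a) \<Rightarrow> ('a \<Rightarrow> 'a) \<Rightarrow> ('a \<Rightarrow> 'a \<Rightarrow> 'a) \<Rightarrow> ('a \<Rightarrow> nat)
     \<Rightarrow> 'a \<Rightarrow> 'a path \<Rightarrow> 'a path" where
  "concat r s cmp d l x = (THE z. is_path r s cmp d z \<and> fst z = enat (d l) + fst x \<and>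
       snd z 0 (d l) = l \<and> shift (d l) z = x)"

type_synonym 'a gmor = "'a path \<times> int \<times> 'a path"

definition path_groupoid :: "('a \<Rightarrow> 'a) \<Rightarrow> ('a \<Rightarrow> 'a) \<Rightarrow> ('a \<Rightarrow> 'a \<Rightarrow> 'a) \<Rightarrow> ('a \<Rightarrow> nat)
     \<Rightarrow> 'a gmor set" where
  "path_groupoid r s cmp d =
     {(concat r s cmp d l x, int (d l) - int (d m), concat r s cmp d m x) | l m x.
        x \<in> path_space r s cmp d \<and> s l = prange x \<and> s m = prange x}"

text \<open>Convolution in C_c(G_Lambda) (counting-measure Haar system):
 (F * H)(gamma) = sum over beta with s(beta) = s(gamma) of F(gamma beta^{-1}) H(beta);
 for gamma = (x,k,y) and beta = (z,n,y), gamma beta^{-1} = (x, k-n, z).\<close>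
definition conv :: "('a \<Rightarrow> 'a) \<Rightarrow> ('a \<Rightarrow> 'a) \<Rightarrow> ('a \<Rightarrow> 'a \<Rightarrow> 'a) \<Rightarrow> ('a \<Rightarrow> nat)
     \<Rightarrow> ('a gmor \<Rightarrow> complex) \<Rightarrow> ('a gmor \<Rightarrow> complex) \<Rightarrow> 'a gmor \<Rightarrow> complex" where
  "conv r s cmp d F H = (\<lambda>(x, k, y).
     infsum (\<lambda>(z, n). F (x, k - n, z) * H (z, n, y))
       {(z, n). (z, n, y) \<in> path_groupoid r s cmp d})"

definition gstar :: "('a gmor \<Rightarrow> complex) \<Rightarrow> 'a gmor \<Rightarrow> complex" where
  "gstar F = (\<lambda>(x, k, y). cnj (F (y, - k, x)))"

definition Cc :: "'a::topological_space set \<Rightarrow> ('a \<Rightarrow> complex) \<Rightarrow> bool" where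
  "Cc S f \<longleftrightarrow> continuous_on S f \<and> (\<forall>x. x \<notin> S \<longrightarrow> f x = 0) \<and>
     (\<exists>K. compact K \<and> K \<subseteq> S \<and> (\<forall>x \<in> S - K. f x = 0))"

definition inner1 :: "('a \<Rightarrow> 'a) \<Rightarrow> ('a \<Rightarrow> nat) \<Rightarrow> ('a \<Rightarrow> complex) \<Rightarrow> ('a \<Rightarrow> complex)
     \<Rightarrow> 'a \<Rightarrow> complex" where
  "inner1 s d \<xi> \<eta> v = infsum (\<lambda>e. cnj (\<xi> e) * \<eta> e) {e \<in> lam1 d. s e = v}"

definition phi :: "('a \<Rightarrow> 'a) \<Rightarrow> ('a \<Rightarrow> complex) \<Rightarrow> ('a \<Rightarrow> complex) \<Rightarrow> 'a \<Rightarrow> complex" where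
  "phi r f \<xi> e = f (r e) * \<xi> e"

definition Psi0 :: "('a \<Rightarrow> complex) \<Rightarrow> 'a gmor \<Rightarrow> complex" where
  "Psi0 f = (\<lambda>(x, k, y). if k = 0 \<and> x = y then f (prange x) else 0)"

definition Psi1 :: "('a \<Rightarrow> complex) \<Rightarrow> 'a gmor \<Rightarrow> complex" where
  "Psi1 \<xi> = (\<lambda>(x, k, y). if k = 1 \<and> shift 1 x = y then \<xi> (snd x 0 1) else 0)"

end

theory Submission
  imports Defs
begin

text \<open>Since Psi0 f lives on the
unit space, convolving with it on the left multiplies by f at the range, which is also what
phi f does to an edge. In Psi1 xi^* Psi1 eta at (x, k, y) only the morphisms (z, 1, y) with
sigma z = x = y contribute, and such a z is the concatenation e x of its first edge e = z(0,1)
with x; so the sum runs over the edges e with s e = r x, giving the inner product at r x.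

The real work is that concatenation is well defined. The path lambda x is built explicitly from
the segments lambda(p,q) provided by unique factorisation, and conversely every path z of degree
at least d lambda with z(0, d lambda) = lambda is recovered from lambda and its shift.\<close>

lemma in_dom_le: "enat L \<le> m \<Longrightarrow> p \<le> q \<Longrightarrow> q \<le> L \<Longrightarrow> in_dom m p q"
  unfolding in_dom_def by (meson enat_ord_simps(1) order_trans)

lemma in_dom_add_le: "p \<le> q \<Longrightarrow> q \<le> L \<Longrightarrow> in_dom (enat L + m) p q"
  by (cases m) (auto simp: in_dom_def)

lemma in_dom_add_iff: "L \<le> q \<Longrightarrow> in_dom (enat L + m) p q \<longleftrightarrow> p \<le> q \<and> enat (q - L) \<le> m"
  by (cases m) (auto simp: in_dom_def)

lemma in_dom_diff_iff: "enat n \<le> m \<Longrightarrow> in_dom (m - enat n) p q \<longleftrightarrow> in_dom m (n + p) (n + q)"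
  by (cases m) (auto simp: in_dom_def)

lemma in_dom_add_sub:
  "in_dom (enat L + m) p q \<Longrightarrow> L \<le> p' \<Longrightarrow> p' \<le> q' \<Longrightarrow> q' \<le> q \<Longrightarrow> in_dom m (p' - L) (q' - L)"
  by (cases m) (auto simp: in_dom_def)

lemma in_dom_0_0: "in_dom m 0 0"
  by (simp add: in_dom_def zero_enat_def[symmetric])

lemma enat_add_diff_cancel: "enat n \<le> m \<Longrightarrow> enat n + (m - enat n) = m"
  by (cases m) auto

lemma fst_shift [simp]: "fst (shift n x) = fst x - enat n"
  by (simp add: shift_def)

lemma snd_shift: "in_dom (fst x - enat n) p q \<Longrightarrow> snd (shift n x) p q = snd x (n + p) (n + q)"
  by (simp add: shift_def)

locale one_graph =
  fixes r s :: "'a \<Rightarrow> 'a" and cmp :: "'a \<Rightarrow> 'a \<Rightarrow> 'a" and d :: "'a \<Rightarrow> nat"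
  assumes source_range: "s (r a) = r a" and range_source: "r (s a) = s a"
    and range_cmp: "s a = r b \<Longrightarrow> r (cmp a b) = r a"
    and source_cmp: "s a = r b \<Longrightarrow> s (cmp a b) = s b"
    and cmp_assoc: "s a = r b \<Longrightarrow> s b = r c \<Longrightarrow> cmp (cmp a b) c = cmp a (cmp b c)"
    and cmp_range_left: "cmp (r a) a = a" and cmp_source_right: "cmp a (s a) = a"
    and degree_range: "d (r a) = 0"
    and degree_cmp: "s a = r b \<Longrightarrow> d (cmp a b) = d a + d b"
    and unique_factorisation:
      "d l = m + n \<Longrightarrow> \<exists>!(a, b). s a = r b \<and> l = cmp a b \<and> d a = m \<and> d b = n"

lemma one_graph_if_topological_1graph:
  "topological_1graph r s cmp d \<Longrightarrow> one_graph r s cmp d"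
  unfolding topological_1graph_def by unfold_locales (elim conjE, fast)+

context one_graph
begin

lemma range_range: "r (r a) = r a"
  by (metis source_range range_source)

lemma source_source: "s (s a) = s a"
  by (metis source_range range_source)

lemma degree_source: "d (s a) = 0"
  by (metis degree_range range_source)

lemma factorisation_unique:
  assumes "s a = r b" "s a' = r b'" "cmp a b = cmp a' b'" "d a = d a'"
  shows "a = a' \<and> b = b'"
proof -
  define P where "P = (\<lambda>(u, v). s u = r v \<and> cmp a b = cmp u v \<and> d u = d a \<and> d v = d b)"
  have "d b' = d b"
    using degree_cmp assms by (metis add_left_cancel)
  then have "P (a, b)" "P (a', b')"
    unfolding P_def using assms by auto
  moreover have "\<exists>!p. P p"
    unfolding P_def using unique_factorisation[OF degree_cmp[OF assms(1)]] .
  ultimately show ?thesis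
    using the1_equality by (metis prod.inject)
qed

lemma factorisation_exists:
  assumes "d l = m + n"
  obtains a b where "s a = r b" "l = cmp a b" "d a = m" "d b = n"
  using unique_factorisation[OF assms] by auto

definition segment :: "'a \<Rightarrow> nat \<Rightarrow> nat \<Rightarrow> 'a" where
  "segment l p q =
     (THE b. \<exists>a c. s a = r b \<and> s b = r c \<and> l = cmp a (cmp b c) \<and> d a = p \<and> d b = q - p)"

lemma segment_eqI:
  assumes "s a = r b" "s b = r c"
  shows "segment (cmp a (cmp b c)) (d a) (d a + d b) = b"
  unfolding segment_def
proof (rule the_equality)
  fix b' assume "\<exists>a' c'. s a' = r b' \<and> s b' = r c' \<and> cmp a (cmp b c) = cmp a' (cmp b' c')
                   \<and> d a' = d a \<and> d b' = d a + d b - d a"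
  then obtain a' c' where b': "s a' = r b'" "s b' = r c'" "cmp a (cmp b c) = cmp a' (cmp b' c')"
    "d a' = d a" "d b' = d b" by auto
  have "cmp b c = cmp b' c'"
    using factorisation_unique[of a "cmp b c" a' "cmp b' c'"] assms b' range_cmp by auto
  then show "b' = b"
    using factorisation_unique[of b c b' c'] assms b' by auto
qed (use assms in auto)

lemma segment_split:
  assumes "p \<le> q" "q \<le> d l"
  obtains a c where "s a = r (segment l p q)" "s (segment l p q) = r c"
    "cmp a (cmp (segment l p q) c) = l" "d a = p" "d (segment l p q) = q - p"
proof -
  obtain a y where a: "s a = r y" "l = cmp a y" "d a = p" "d y = d l - p"
    using factorisation_exists[of l p "d l - p"] assms by auto
  have "d y = (q - p) + (d l - q)"
    using a(4) assms by simp
  then obtain b c where b: "s b = r c" "y = cmp b c" "d b = q - p"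
    by (rule factorisation_exists)
  have "s a = r b"
    using a(1) b range_cmp by simp
  moreover have "segment l p q = b"
    using segment_eqI[OF \<open>s a = r b\<close> b(1)] a b assms by simp
  ultimately show thesis
    using that a b by simp
qed

lemma segment_degree: "p \<le> q \<Longrightarrow> q \<le> d l \<Longrightarrow> d (segment l p q) = q - p"
  by (rule segment_split) simp

lemma segment_range:
  assumes "p \<le> q" "q \<le> d l"
  shows "r (segment l p q) = segment l p p"
proof -
  let ?b = "segment l p q"
  obtain a c where h: "s a = r ?b" "s ?b = r c" "cmp a (cmp ?b c) = l" "d a = p"
    using segment_split[OF assms] by blast
  have "r (cmp ?b c) = r ?b"
    using range_cmp[OF h(2)] .
  then have "cmp (r ?b) (cmp ?b c) = cmp ?b c"
    using cmp_range_left[of "cmp ?b c"] by simp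
  moreover have "segment (cmp a (cmp (r ?b) (cmp ?b c))) (d a) (d a + d (r ?b)) = r ?b"
    by (rule segment_eqI) (simp_all add: h(1) range_range source_range \<open>r (cmp ?b c) = r ?b\<close>)
  ultimately show ?thesis
    using h(3,4) degree_range by simp
qed

lemma segment_source:
  assumes "p \<le> q" "q \<le> d l"
  shows "s (segment l p q) = segment l q q"
proof -
  let ?b = "segment l p q"
  obtain a c where h: "s a = r ?b" "s ?b = r c" "cmp a (cmp ?b c) = l" "d a = p" "d ?b = q - p"
    using segment_split[OF assms] by blast
  have "cmp (cmp a ?b) (cmp (s ?b) c) = l"
    using h(1-3) cmp_assoc cmp_range_left[of c] by simp
  moreover have "segment (cmp (cmp a ?b) (cmp (s ?b) c)) (d (cmp a ?b)) (d (cmp a ?b) + d (s ?b)) = s ?b"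
    by (rule segment_eqI) (simp_all add: h(1,2) source_cmp range_source source_source range_range source_range)
  moreover have "d (cmp a ?b) = q"
    using degree_cmp[OF h(1)] h(4,5) assms(1) by simp
  ultimately show ?thesis
    using degree_source by simp
qed

lemma segment_trans:
  assumes "p \<le> q" "q \<le> t" "t \<le> d l"
  shows "segment l p t = cmp (segment l p q) (segment l q t)"
proof -
  let ?b = "segment l p t"
  obtain a c where h: "s a = r ?b" "s ?b = r c" "cmp a (cmp ?b c) = l" "d a = p" "d ?b = t - p"
    using segment_split[of p t l] assms by (metis order_trans)
  have "d ?b = (q - p) + (t - q)"
    using h(5) assms by simp
  then obtain b1 b2 where b: "s b1 = r b2" "?b = cmp b1 b2" "d b1 = q - p" "d b2 = t - q"
    by (rule factorisation_exists)
  have b1: "s a = r b1"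
    using h(1) b(1,2) range_cmp by simp
  have b2: "s b2 = r c"
    using h(2) b(1,2) source_cmp by simp
  have l1: "cmp a (cmp b1 (cmp b2 c)) = l"
    using h(3) b(2) cmp_assoc[OF b(1) b2] by simp
  have b1_b2c: "s b1 = r (cmp b2 c)"
    using b(1) range_cmp[OF b2] by simp
  then have l2: "cmp (cmp a b1) (cmp b2 c) = l"
    using l1 cmp_assoc[OF b1] by simp
  have "segment l p q = b1"
    using segment_eqI[OF b1 b1_b2c] l1 h(4) b(3) assms(1) by simp
  moreover have "segment l q t = b2"
    using segment_eqI[of "cmp a b1" b2 c] source_cmp[OF b1] b(1) b2 l2 degree_cmp[OF b1] h(4) b(3,4) assms
    by simp
  ultimately show ?thesis
    using b(2) by simp
qed

lemma segment_whole: "segment l 0 (d l) = l"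
  using segment_eqI[of "r l" l "s l"] source_range range_source
  by (simp add: cmp_range_left cmp_source_right degree_range)

lemma segment_end: "segment l (d l) (d l) = s l"
  using segment_source[of 0 "d l" l] segment_whole by simp

abbreviation is_lpath :: "'a path \<Rightarrow> bool" where
  "is_lpath \<equiv> is_path r s cmp d"

abbreviation lconcat :: "'a \<Rightarrow> 'a path \<Rightarrow> 'a path" where
  "lconcat \<equiv> concat r s cmp d"

abbreviation G :: "'a gmor set" where
  "G \<equiv> path_groupoid r s cmp d"

lemma is_lpathD:
  assumes "is_lpath x" "in_dom (fst x) p q"
  shows "d (snd x p q) = q - p" "r (snd x p q) = snd x p p" "s (snd x p q) = snd x q q"
  using assms unfolding is_path_def by auto

lemma is_lpath_cmp:
  assumes "is_lpath x" "in_dom (fst x) p q" "in_dom (fst x) q t"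
  shows "snd x p t = cmp (snd x p q) (snd x q t)"
  using assms unfolding is_path_def by auto

lemma is_lpath_undefined: "is_lpath x \<Longrightarrow> \<not> in_dom (fst x) p q \<Longrightarrow> snd x p q = undefined"
  unfolding is_path_def by auto

lemma degree_prange: "is_lpath x \<Longrightarrow> d (prange x) = 0"
  using is_lpathD(1)[OF _ in_dom_0_0] by (simp add: prange_def)

lemma source_prange: "is_lpath x \<Longrightarrow> s (prange x) = prange x"
  using is_lpathD(3)[OF _ in_dom_0_0] by (simp add: prange_def)

lemma shift_zero: "is_lpath x \<Longrightarrow> shift 0 x = x"
  unfolding shift_def using is_lpath_undefined
  by (fastforce simp: prod_eq_iff fun_eq_iff zero_enat_def[symmetric])

lemma path_segment:
  assumes w: "is_lpath w" and "enat L \<le> fst w" "p \<le> q" "q \<le> L"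
  shows "snd w p q = segment (snd w 0 L) p q"
proof -
  have dom: "in_dom (fst w) 0 p" "in_dom (fst w) p q" "in_dom (fst w) q L" "in_dom (fst w) p L"
    using in_dom_le assms by auto
  have "snd w 0 L = cmp (snd w 0 p) (cmp (snd w p q) (snd w q L))"
    using is_lpath_cmp[OF w] dom by metis
  moreover have "s (snd w 0 p) = r (snd w p q)" "s (snd w p q) = r (snd w q L)"
    using is_lpathD[OF w] dom by simp_all
  moreover have "d (snd w 0 p) = p" "d (snd w p q) = q - p"
    using is_lpathD(1)[OF w] dom by simp_all
  ultimately show ?thesis
    using segment_eqI[of "snd w 0 p" "snd w p q" "snd w q L"] assms(3) by simp
qed

definition path_concat :: "'a \<Rightarrow> 'a path \<Rightarrow> 'a path" where
  "path_concat l x = (enat (d l) + fst x, \<lambda>p q.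
     if in_dom (enat (d l) + fst x) p q then
       if q \<le> d l then segment l p q
       else if d l \<le> p then snd x (p - d l) (q - d l)
       else cmp (segment l p (d l)) (snd x 0 (q - d l))
     else undefined)"

lemma fst_path_concat [simp]: "fst (path_concat l x) = enat (d l) + fst x"
  by (simp add: path_concat_def)

lemma path_concat_left: "p \<le> q \<Longrightarrow> q \<le> d l \<Longrightarrow> snd (path_concat l x) p q = segment l p q"
  by (simp add: path_concat_def in_dom_add_le)

lemma path_concat_initial: "snd (path_concat l x) 0 (d l) = l"
  by (simp add: path_concat_left segment_whole)

lemma snd_path_concat_shift:
  assumes w: "is_lpath w" and L: "enat (d l) \<le> fst w" and l: "snd w 0 (d l) = l"
    and pq: "in_dom (fst w) p q"
  shows "snd (path_concat l (shift (d l) w)) p q = snd w p q"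
proof -
  let ?L = "d l" and ?x = "shift (d l) w"
  have dom: "in_dom (enat ?L + fst ?x) p q"
    using pq L by (simp add: enat_add_diff_cancel)
  have dom_x: "in_dom (fst w - enat ?L) (p' - ?L) (q - ?L)" if "?L \<le> p'" "p' \<le> q" for p'
    using pq that in_dom_diff_iff[OF L] by (simp add: in_dom_def)
  consider "q \<le> ?L" | "?L < q" "?L \<le> p" | "p < ?L" "?L < q"
    by linarith
  then show ?thesis
  proof cases
    case 1
    then show ?thesis
      using path_concat_left path_segment[OF w L] pq l by (simp add: in_dom_def)
  next
    case 2
    have "snd ?x (p - ?L) (q - ?L) = snd w p q"
      using snd_shift[OF dom_x] 2 pq by (simp add: in_dom_def)
    then show ?thesis
      using dom 2 by (simp add: path_concat_def)
  next
    case 3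
    have "in_dom (fst w) p ?L" "in_dom (fst w) ?L q"
      using L pq 3 by (simp_all add: in_dom_def)
    then have "snd w p q = cmp (snd w p ?L) (snd w ?L q)"
      using is_lpath_cmp[OF w] by blast
    moreover have "snd w p ?L = segment l p ?L"
      using path_segment[OF w L] 3 l by simp
    moreover have "snd ?x 0 (q - ?L) = snd w ?L q"
      using snd_shift[OF dom_x[of ?L]] 3 by simp
    ultimately show ?thesis
      using dom 3 by (simp add: path_concat_def)
  qed
qed

lemma path_concat_shift:
  assumes w: "is_lpath w" and "enat (d l) \<le> fst w" and "snd w 0 (d l) = l"
  shows "path_concat l (shift (d l) w) = w"
proof -
  have "fst (path_concat l (shift (d l) w)) = fst w"
    using assms(2) by (simp add: enat_add_diff_cancel)
  moreover have "snd (path_concat l (shift (d l) w)) p q = snd w p q" for p q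
    using calculation snd_path_concat_shift[OF assms] is_lpath_undefined[OF w]
    by (cases "in_dom (fst w) p q") (simp_all add: path_concat_def)
  ultimately show ?thesis
    by (simp add: prod_eq_iff fun_eq_iff)
qed

context
  fixes l :: 'a and x :: "'a path"
  assumes path_x: "is_lpath x" and source_l: "s l = prange x"
begin

lemma prange_eq_source: "snd x 0 0 = s l"
  using source_l by (simp add: prange_def)

lemma path_concat_right:
  assumes "d l \<le> p" "p \<le> q" "in_dom (fst x) (p - d l) (q - d l)"
  shows "snd (path_concat l x) p q = snd x (p - d l) (q - d l)"
proof (cases "q \<le> d l")
  case True
  then have "p = d l" "q = d l"
    using assms by (auto simp: in_dom_def)
  then show ?thesis
    using path_concat_left segment_end prange_eq_source by simp
next
  case False
  have "enat (q - d l) \<le> fst x"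
    using assms(3) by (simp add: in_dom_def)
  then have "in_dom (enat (d l) + fst x) p q"
    using False assms(2) in_dom_add_iff by simp
  then show ?thesis
    using False assms(1) by (simp add: path_concat_def)
qed

lemma path_concat_middle:
  assumes "p \<le> d l" "d l \<le> q" "enat (q - d l) \<le> fst x"
  shows "snd (path_concat l x) p q = cmp (segment l p (d l)) (snd x 0 (q - d l))"
proof -
  have dom: "in_dom (fst x) 0 (q - d l)"
    using assms(3) by (simp add: in_dom_def)
  consider "q = d l" | "p = d l" "d l < q" | "p < d l" "d l < q"
    using assms by linarith
  then show ?thesis
  proof cases
    case 1
    have "s (segment l p (d l)) = s l"
      using segment_source[of p "d l" l] segment_end assms(1) by simp
    then have "snd x 0 (q - d l) = s (segment l p (d l))"
      using 1 prange_eq_source by simp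
    then show ?thesis
      using 1 assms(1) path_concat_left cmp_source_right by simp
  next
    case 2
    have "segment l p (d l) = r (snd x 0 (q - d l))"
      using is_lpathD(2)[OF path_x dom] prange_eq_source segment_end 2 by simp
    then show ?thesis
      using 2 path_concat_right[of p q] dom cmp_range_left by simp
  next
    case 3
    then have "in_dom (enat (d l) + fst x) p q"
      using assms(3) in_dom_add_iff by simp
    then show ?thesis
      using 3 by (simp add: path_concat_def)
  qed
qed

lemma segment_composable:
  assumes "p \<le> d l" "enat n \<le> fst x"
  shows "s (segment l p (d l)) = r (snd x 0 n)"
proof -
  have "in_dom (fst x) 0 n"
    using assms(2) by (simp add: in_dom_def)
  then show ?thesis
    using segment_source[OF assms(1) order_refl] segment_end is_lpathD(2)[OF path_x] prange_eq_source
    by simp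
qed

lemma path_concat_degree_range_source:
  assumes "in_dom (enat (d l) + fst x) p q"
  shows "d (snd (path_concat l x) p q) = q - p \<and> r (snd (path_concat l x) p q) = snd (path_concat l x) p p
    \<and> s (snd (path_concat l x) p q) = snd (path_concat l x) q q"
proof -
  let ?Z = "snd (path_concat l x)" and ?L = "d l"
  have pq: "p \<le> q"
    using assms by (simp add: in_dom_def)
  note dom_x = in_dom_add_sub[OF assms]
  consider "q \<le> ?L" | "?L \<le> p" | "p \<le> ?L" "?L \<le> q"
    by linarith
  then show ?thesis
  proof cases
    case 1
    then show ?thesis
      using pq path_concat_left segment_degree segment_range segment_source by simp
  next
    case 2
    have x_pq: "in_dom (fst x) (p - ?L) (q - ?L)"
      using dom_x 2 pq by simp
    have "?Z p q = snd x (p - ?L) (q - ?L)" "?Z p p = snd x (p - ?L) (p - ?L)"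
      "?Z q q = snd x (q - ?L) (q - ?L)"
      using path_concat_right dom_x 2 pq by simp_all
    then show ?thesis
      using is_lpathD[OF path_x x_pq] 2 by simp
  next
    case 3
    have x_qq: "in_dom (fst x) (q - ?L) (q - ?L)" and x_0q: "in_dom (fst x) 0 (q - ?L)"
      using dom_x[of q q] dom_x[of ?L q] 3 by simp_all
    then have comp: "s (segment l p ?L) = r (snd x 0 (q - ?L))"
      using segment_composable 3 by (simp add: in_dom_def)
    have "?Z p q = cmp (segment l p ?L) (snd x 0 (q - ?L))"
      using path_concat_middle 3 x_0q by (simp add: in_dom_def)
    moreover have "?Z p p = segment l p p" "?Z q q = snd x (q - ?L) (q - ?L)"
      using path_concat_left path_concat_right x_qq 3 by simp_all
    ultimately show ?thesis
      using degree_cmp[OF comp] range_cmp[OF comp] source_cmp[OF comp] 3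
        segment_degree segment_range is_lpathD[OF path_x x_0q] by simp
  qed
qed

lemma path_concat_cmp_junction:
  assumes "in_dom (enat (d l) + fst x) p q" "in_dom (enat (d l) + fst x) q t" "p \<le> d l" "d l \<le> t"
  shows "snd (path_concat l x) p t = cmp (snd (path_concat l x) p q) (snd (path_concat l x) q t)"
proof -
  let ?Z = "snd (path_concat l x)" and ?L = "d l"
  have pq: "p \<le> q" and qt: "q \<le> t" and pt: "in_dom (enat ?L + fst x) p t"
    using assms by (auto simp: in_dom_def)
  note dom_x = in_dom_add_sub[OF pt]
  show ?thesis
  proof (cases "q \<le> ?L")
    case True
    let ?y = "snd x 0 (t - ?L)"
    have "enat (t - ?L) \<le> fst x"
      using dom_x[of ?L t] assms(4) by (simp add: in_dom_def)
    then have "?Z p t = cmp (segment l p ?L) ?y" "?Z q t = cmp (segment l q ?L) ?y"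
      using path_concat_middle True assms(3,4) by simp_all
    moreover have "s (segment l p q) = r (segment l q ?L)" "s (segment l q ?L) = r ?y"
      using segment_source segment_range segment_composable \<open>enat (t - ?L) \<le> fst x\<close> True pq
      by simp_all
    ultimately show ?thesis
      using path_concat_left cmp_assoc segment_trans[of p q ?L l] True pq by simp
  next
    case False
    let ?a = "segment l p ?L" and ?y1 = "snd x 0 (q - ?L)" and ?y2 = "snd x (q - ?L) (t - ?L)"
    have x_0q: "in_dom (fst x) 0 (q - ?L)" and x_qt: "in_dom (fst x) (q - ?L) (t - ?L)"
      using dom_x[of ?L q] dom_x[of q t] False qt by simp_all
    then have "?Z p q = cmp ?a ?y1" "?Z q t = ?y2"
      using path_concat_middle path_concat_right False assms(3) qt by (simp_all add: in_dom_def)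
    moreover have "?Z p t = cmp ?a (cmp ?y1 ?y2)"
      using path_concat_middle is_lpath_cmp[OF path_x x_0q x_qt] dom_x[of ?L t] False assms(3) qt
      by (simp add: in_dom_def)
    moreover have "s ?a = r ?y1" "s ?y1 = r ?y2"
      using segment_composable is_lpathD[OF path_x] x_0q x_qt assms(3) by (simp_all add: in_dom_def)
    ultimately show ?thesis
      using cmp_assoc by simp
  qed
qed

lemma path_concat_cmp:
  assumes "in_dom (enat (d l) + fst x) p q" "in_dom (enat (d l) + fst x) q t"
  shows "snd (path_concat l x) p t = cmp (snd (path_concat l x) p q) (snd (path_concat l x) q t)"
proof -
  let ?L = "d l"
  have pq: "p \<le> q" and qt: "q \<le> t" and pt: "in_dom (enat ?L + fst x) p t"
    using assms by (auto simp: in_dom_def)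
  consider "t \<le> ?L" | "?L \<le> p" | "p \<le> ?L" "?L \<le> t"
    by linarith
  then show ?thesis
  proof cases
    case 1
    then show ?thesis
      using pq qt path_concat_left segment_trans[OF pq qt 1] by simp
  next
    case 2
    have "in_dom (fst x) (p - ?L) (q - ?L)" "in_dom (fst x) (q - ?L) (t - ?L)"
      "in_dom (fst x) (p - ?L) (t - ?L)"
      using in_dom_add_sub[OF pt] 2 pq qt by simp_all
    then show ?thesis
      using path_concat_right is_lpath_cmp[OF path_x, of "p - ?L" "q - ?L" "t - ?L"] 2 pq qt by simp
  next
    case 3
    then show ?thesis
      using path_concat_cmp_junction assms by blast
  qed
qed

lemma is_path_path_concat: "is_lpath (path_concat l x)"
  unfolding is_path_def
  using path_concat_degree_range_source path_concat_cmp by (simp add: path_concat_def)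

lemma shift_path_concat: "shift (d l) (path_concat l x) = x"
proof -
  have "snd (shift (d l) (path_concat l x)) p q = snd x p q" for p q
    using path_concat_right[of "d l + p" "d l + q"] is_lpath_undefined[OF path_x]
    by (auto simp: shift_def in_dom_def)
  then show ?thesis
    by (simp add: prod_eq_iff fun_eq_iff)
qed

lemma concat_eq_path_concat: "lconcat l x = path_concat l x"
  unfolding concat_def
proof (rule the_equality)
  fix z
  assume z: "is_lpath z \<and> fst z = enat (d l) + fst x \<and> snd z 0 (d l) = l \<and> shift (d l) z = x"
  then have "path_concat l (shift (d l) z) = z"
    by (intro path_concat_shift) auto
  then show "z = path_concat l x"
    using z by simp
qed (simp add: is_path_path_concat path_concat_initial shift_path_concat)

lemma is_path_concat: "is_lpath (lconcat l x)"
  and fst_concat: "fst (lconcat l x) = enat (d l) + fst x"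
  and concat_initial: "snd (lconcat l x) 0 (d l) = l"
  and shift_concat: "shift (d l) (lconcat l x) = x"
  by (simp_all add: concat_eq_path_concat is_path_path_concat path_concat_initial shift_path_concat)

end

lemma concat_unique:
  assumes x: "is_lpath x" and z: "is_lpath z"
    and "enat (d l) \<le> fst z" "snd z 0 (d l) = l" "shift (d l) z = x"
  shows "lconcat l x = z"
proof -
  have "in_dom (fst z) 0 (d l)" "in_dom (fst z - enat (d l)) 0 0"
    using assms(3) by (simp_all add: in_dom_def zero_enat_def[symmetric])
  then have "s (snd z 0 (d l)) = snd z (d l) (d l)" "prange x = snd z (d l) (d l)"
    using is_lpathD(3)[OF z] snd_shift[of z "d l" 0 0] assms(5) by (simp_all add: prange_def)
  then have "s l = prange x"
    using assms(4) by simp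
  then show ?thesis
    using concat_eq_path_concat[OF x] path_concat_shift[OF z assms(3,4)] assms(5) by simp
qed

lemma concat_prange: "is_lpath x \<Longrightarrow> lconcat (prange x) x = x"
  using concat_unique[of x x "prange x"] shift_zero degree_prange
  by (simp add: prange_def zero_enat_def[symmetric])

lemma path_groupoidE:
  assumes "(z1, k, z2) \<in> G"
  obtains l m x where "is_lpath x" "s l = prange x" "s m = prange x"
    "z1 = lconcat l x" "z2 = lconcat m x" "k = int (d l) - int (d m)"
  using assms unfolding path_groupoid_def path_space_def by blast

lemma path_groupoid_paths:
  assumes "(z1, k, z2) \<in> G"
  shows "is_lpath z1" "is_lpath z2"
  using assms by (metis path_groupoidE is_path_concat)+

lemma path_groupoid_degree:
  assumes "(z, int n, y) \<in> G"
  shows "enat n \<le> fst z"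
proof -
  obtain l m x where "is_lpath x" "s l = prange x" "z = lconcat l x" "int n = int (d l) - int (d m)"
    using assms by (rule path_groupoidE)
  then show ?thesis
    using fst_concat by (cases "fst x") auto
qed

lemma concat_in_path_groupoid:
  assumes "is_lpath x" "s l = prange x"
  shows "(lconcat l x, int (d l), x) \<in> G"
proof -
  have "(lconcat l x, int (d l) - int (d (prange x)), lconcat (prange x) x) \<in> G"
    unfolding path_groupoid_def path_space_def using assms source_prange by blast
  then show ?thesis
    using assms(1) concat_prange degree_prange by simp
qed

lemma bij_betw_first_edge:
  assumes x: "is_lpath x"
  shows "bij_betw (\<lambda>(z, n). snd z 0 1) {(z, n). (z, n, x) \<in> G \<and> n = 1 \<and> shift 1 z = x}
           {e \<in> lam1 d. s e = prange x}"
proof -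
  have first_edge: "snd z 0 1 \<in> lam1 d \<and> s (snd z 0 1) = prange x \<and> lconcat (snd z 0 1) x = z"
    if "(z, 1, x) \<in> G" "shift 1 z = x" for z
  proof -
    have z: "is_lpath z" and "enat 1 \<le> fst z"
      using path_groupoid_paths path_groupoid_degree[of z 1 x] that by auto
    then have dom: "in_dom (fst z) 0 1" "in_dom (fst z - enat 1) 0 0"
      by (simp_all add: in_dom_def zero_enat_def[symmetric])
    then have "d (snd z 0 1) = 1" "s (snd z 0 1) = prange x"
      using is_lpathD[OF z] snd_shift[of z 1 0 0] that(2) by (simp_all add: prange_def)
    then show ?thesis
      using concat_unique[OF x z] \<open>enat 1 \<le> fst z\<close> that(2) by (simp add: lam1_def)
  qed
  have extension: "(lconcat e x, 1, x) \<in> G \<and> shift 1 (lconcat e x) = x \<and> snd (lconcat e x) 0 1 = e"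
    if "e \<in> lam1 d" "s e = prange x" for e
    using concat_in_path_groupoid[OF x that(2)] shift_concat[OF x that(2)]
      concat_initial[OF x that(2)] that(1)
    by (simp add: lam1_def)
  show ?thesis
    by (rule bij_betw_byWitness[where f' = "\<lambda>e. (lconcat e x, 1)"]) (use first_edge extension in auto)
qed

lemma conv_Psi0_left:
  assumes "(x, k, y) \<in> G"
  shows "conv r s cmp d (Psi0 f) H (x, k, y) = f (prange x) * H (x, k, y)"
proof -
  have "conv r s cmp d (Psi0 f) H (x, k, y) =
      infsum (\<lambda>(z, n). Psi0 f (x, k - n, z) * H (z, n, y)) {(z, n). (z, n, y) \<in> G}"
    by (simp add: conv_def)
  also have "\<dots> = infsum (\<lambda>(z, n). Psi0 f (x, k - n, z) * H (z, n, y)) {(x, k)}"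
    by (rule infsum_cong_neutral) (use assms in \<open>auto simp: Psi0_def split: if_splits\<close>)
  also have "\<dots> = f (prange x) * H (x, k, y)"
    by (simp add: Psi0_def)
  finally show ?thesis .
qed

lemma conv_Psi0_Psi1:
  assumes "(x, k, y) \<in> G"
  shows "conv r s cmp d (Psi0 f) (Psi1 \<xi>) (x, k, y) = Psi1 (phi r f \<xi>) (x, k, y)"
proof (cases "k = 1 \<and> shift 1 x = y")
  case True
  have "is_lpath x" "enat 1 \<le> fst x"
    using path_groupoid_paths path_groupoid_degree[of x 1 y] assms True by auto
  then have "r (snd x 0 1) = prange x"
    using is_lpathD(2) by (simp add: in_dom_def prange_def)
  then show ?thesis
    using True assms by (simp add: conv_Psi0_left Psi1_def phi_def)
next
  case False
  then show ?thesis
    using assms by (auto simp: conv_Psi0_left Psi1_def)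
qed

lemma conv_star_Psi1_Psi1:
  assumes "(x, k, y) \<in> G"
  shows "conv r s cmp d (gstar (Psi1 \<xi>)) (Psi1 \<eta>) (x, k, y) = Psi0 (inner1 s d \<xi> \<eta>) (x, k, y)"
proof -
  have summand: "gstar (Psi1 \<xi>) (x, k - n, z) * Psi1 \<eta> (z, n, y) =
      (if k = 0 \<and> x = y \<and> n = 1 \<and> shift 1 z = x then cnj (\<xi> (snd z 0 1)) * \<eta> (snd z 0 1) else 0)"
    for z n
    by (auto simp: gstar_def Psi1_def)
  show ?thesis
  proof (cases "k = 0 \<and> x = y")
    case True
    have "is_lpath x"
      using path_groupoid_paths assms by blast
    have "conv r s cmp d (gstar (Psi1 \<xi>)) (Psi1 \<eta>) (x, k, y) =
        infsum (\<lambda>(z, n). gstar (Psi1 \<xi>) (x, k - n, z) * Psi1 \<eta> (z, n, y)) {(z, n). (z, n, y) \<in> G}"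
      by (simp add: conv_def)
    also have "\<dots> = infsum (\<lambda>(z, n). cnj (\<xi> (snd z 0 1)) * \<eta> (snd z 0 1))
          {(z, n). (z, n, x) \<in> G \<and> n = 1 \<and> shift 1 z = x}"
      unfolding summand using True by (intro infsum_cong_neutral) (auto split: if_splits)
    also have "\<dots> = infsum (\<lambda>e. cnj (\<xi> e) * \<eta> e) {e \<in> lam1 d. s e = prange x}"
      using infsum_reindex_bij_betw[OF bij_betw_first_edge[OF \<open>is_lpath x\<close>],
          of "\<lambda>e. cnj (\<xi> e) * \<eta> e"]
      by (simp add: case_prod_unfold)
    finally show ?thesis
      using True by (simp add: Psi0_def inner1_def)
  next
    case False
    then show ?thesis
      by (auto simp: conv_def summand Psi0_def case_prod_unfold)
  qed
qed

end

theorem lemma5p3: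
  fixes r s :: "'a::{t2_space, second_countable_topology} \<Rightarrow> 'a"
    and cmp :: "'a \<Rightarrow> 'a \<Rightarrow> 'a" and d :: "'a \<Rightarrow> nat"
    and f \<xi> \<eta> :: "'a \<Rightarrow> complex"
  assumes "topological_1graph r s cmp d"
    and "Cc (lam0 r) f" and "Cc (lam1 d) \<xi>" and "Cc (lam1 d) \<eta>"
  shows "(\<forall>\<gamma> \<in> path_groupoid r s cmp d.
           conv r s cmp d (gstar (Psi1 \<xi>)) (Psi1 \<eta>) \<gamma> = Psi0 (inner1 s d \<xi> \<eta>) \<gamma>) \<and>
         (\<forall>\<gamma> \<in> path_groupoid r s cmp d.
           conv r s cmp d (Psi0 f) (Psi1 \<xi>) \<gamma> = Psi1 (phi r f \<xi>) \<gamma>)"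
proof -
  interpret one_graph r s cmp d
    using assms(1) by (rule one_graph_if_topological_1graph)
  show ?thesis
    using conv_star_Psi1_Psi1 conv_Psi0_Psi1 by (simp add: Ball_def split_paired_All)
qed

end
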